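(* Let $G,H$ be graded groups, $U\subset G$ open, $\Phi:U\to H$ a smooth map and $x\in U$. If $\Phi$ is Pansu differentiable at $x$, then $\Phi$ preserves the filtration at $x$.
   Context: A graded group is a connected, simply connected nilpotent real Lie group $G$ whose Lie algebra $\mathfrak g=\bigoplus_{j\ge1}\mathfrak g_j$ (finitely many nonzero) satisfies $[\mathfrak g_i,\mathfrak g_j]\subset\mathfrak g_{i+j}$; $\exp_G$ is a global diffeomorphism. Dilations: $\delta_rX=r^jX$ for $X\in\mathfrak g_j$, $r>0$, and $\delta_r(\exp_GX)=\exp_G(\delta_rX)$. $H$ is a graded group with Lie algebra $\mathfrak h=\bigoplus_j\mathfrak h_j$. For $x\in G$, $\tau^G_x=D_0L_x:\mathfrak g\to T_xG$ (differential of left translation at the identity), similarly $\tau^H$. For smooth $\Phi$, $\mathfrak d_x\Phi:=(\tau^H_{\Phi(x)})^{-1}\circ D_x\Phi\circ\tau^G_x:\mathfrak g\to\mathfrak h$; $\Phi$ preserves the filtration at $x$ if $\mathfrak d_x\Phi(\mathfrak g_j)\subset\mathfrak h_1\oplus\dots\oplus\mathfrak h_j$ for every $j$. $\Phi$ is Pansu differentiable at $x$ if for every $z\in G$ the limit $\lim_{\varepsilon\to0^+}\delta_{\varepsilon^{-1}}(\Phi(x)^{-1}\Phi(x\delta_\varepsilon z))$ exists. *)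

theory Defs
  imports "HOL-Analysis.Analysis"
begin

text \<open>Graded groups are modelled in exponential coordinates: the underlying manifold of G
is its Lie algebra (a finite-dimensional real vector space, type of class euclidean_space),
exp is the identity, the identity element is 0, and the group law is a smooth map.\<close>

fun iter_dd :: "'a::real_normed_vector list \<Rightarrow> ('a \<Rightarrow> 'b::real_normed_vector) \<Rightarrow> 'a \<Rightarrow> 'b" where
  "iter_dd [] f = f"
| "iter_dd (v # vs) f = (\<lambda>x. frechet_derivative (iter_dd vs f) (at x) v)"

definition smooth_on :: "'a::real_normed_vector set \<Rightarrow> ('a \<Rightarrow> 'b::real_normed_vector) \<Rightarrow> bool" where
  "smooth_on U f \<longleftrightarrow> (\<forall>vs. \<forall>x\<in>U. iter_dd vs f differentiable (at x))"

definition ginv :: "('g \<Rightarrow> 'g \<Rightarrow> 'g::zero) \<Rightarrow> 'g \<Rightarrow> 'g" where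
  "ginv mul y = (THE z. mul y z = 0 \<and> mul z y = 0)"

text \<open>Lie bracket in exponential coordinates, via the group commutator:
  exp(tX) exp(tY) exp(tX)^{-1} exp(tY)^{-1} = exp(t^2 [X,Y] + O(t^3)).\<close>
definition lie_bracket :: "('g::real_normed_vector \<Rightarrow> 'g \<Rightarrow> 'g) \<Rightarrow> 'g \<Rightarrow> 'g \<Rightarrow> 'g" where
  "lie_bracket mul X Y = Lim (at_right (0::real))
     (\<lambda>t. (1 / t^2) *\<^sub>R mul (mul (t *\<^sub>R X) (t *\<^sub>R Y)) (mul (ginv mul (t *\<^sub>R X)) (ginv mul (t *\<^sub>R Y))))"

definition graded_decomp :: "(nat \<Rightarrow> 'g::euclidean_space set) \<Rightarrow> nat \<Rightarrow> bool" where
  "graded_decomp V s \<longleftrightarrow> (\<forall>j. subspace (V j)) \<and> V 0 = {0} \<and> (\<forall>j>s. V j = {0}) \<and>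
     (\<forall>x. \<exists>!c. (\<forall>j. c j \<in> V j) \<and> x = (\<Sum>j\<in>{1..s}. c j))"

definition grade_comp :: "(nat \<Rightarrow> 'g::euclidean_space set) \<Rightarrow> nat \<Rightarrow> 'g \<Rightarrow> nat \<Rightarrow> 'g" where
  "grade_comp V s x = (THE c. (\<forall>j. c j \<in> V j) \<and> x = (\<Sum>j\<in>{1..s}. c j))"

definition dil :: "(nat \<Rightarrow> 'g::euclidean_space set) \<Rightarrow> nat \<Rightarrow> real \<Rightarrow> 'g \<Rightarrow> 'g" where
  "dil V s r x = (\<Sum>j\<in>{1..s}. (r ^ j) *\<^sub>R grade_comp V s x j)"

definition graded_group :: "('g::euclidean_space \<Rightarrow> 'g \<Rightarrow> 'g) \<Rightarrow> (nat \<Rightarrow> 'g set) \<Rightarrow> nat \<Rightarrow> bool" where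
  "graded_group mul V s \<longleftrightarrow>
     smooth_on UNIV (\<lambda>p. mul (fst p) (snd p)) \<and>
     (\<forall>x y z. mul (mul x y) z = mul x (mul y z)) \<and>
     (\<forall>x. mul 0 x = x \<and> mul x 0 = x) \<and>
     (\<forall>x. \<exists>y. mul x y = 0 \<and> mul y x = 0) \<and>
     (\<forall>X a b. mul (a *\<^sub>R X) (b *\<^sub>R X) = (a + b) *\<^sub>R X) \<and>
     graded_decomp V s \<and>
     (\<forall>i j X Y. X \<in> V i \<longrightarrow> Y \<in> V j \<longrightarrow> lie_bracket mul X Y \<in> V (i + j))"

definition tau :: "('g::real_normed_vector \<Rightarrow> 'g \<Rightarrow> 'g) \<Rightarrow> 'g \<Rightarrow> 'g \<Rightarrow> 'g" where
  "tau mul x = frechet_derivative (mul x) (at 0)"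

definition frak_d :: "('g::real_normed_vector \<Rightarrow> 'g \<Rightarrow> 'g) \<Rightarrow> ('h::real_normed_vector \<Rightarrow> 'h \<Rightarrow> 'h)
    \<Rightarrow> ('g \<Rightarrow> 'h) \<Rightarrow> 'g \<Rightarrow> 'g \<Rightarrow> 'h" where
  "frak_d mulG mulH \<Phi> x = inv (tau mulH (\<Phi> x)) \<circ> frechet_derivative \<Phi> (at x) \<circ> tau mulG x"

definition preserves_filtration_at ::
  "('g::euclidean_space \<Rightarrow> 'g \<Rightarrow> 'g) \<Rightarrow> (nat \<Rightarrow> 'g set) \<Rightarrow> ('h::euclidean_space \<Rightarrow> 'h \<Rightarrow> 'h) \<Rightarrow> (nat \<Rightarrow> 'h set)
    \<Rightarrow> ('g \<Rightarrow> 'h) \<Rightarrow> 'g \<Rightarrow> bool" where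
  "preserves_filtration_at mulG VG mulH VH \<Phi> x \<longleftrightarrow>
     (\<forall>j. frak_d mulG mulH \<Phi> x ` VG j \<subseteq> {(\<Sum>i\<in>{1..j}. w i) | w. \<forall>i. w i \<in> VH i})"

definition pansu_differentiable_at ::
  "('g::euclidean_space \<Rightarrow> 'g \<Rightarrow> 'g) \<Rightarrow> (nat \<Rightarrow> 'g set) \<Rightarrow> nat \<Rightarrow>
   ('h::euclidean_space \<Rightarrow> 'h \<Rightarrow> 'h) \<Rightarrow> (nat \<Rightarrow> 'h set) \<Rightarrow> nat \<Rightarrow> ('g \<Rightarrow> 'h) \<Rightarrow> 'g \<Rightarrow> bool" where
  "pansu_differentiable_at mulG VG sG mulH VH sH \<Phi> x \<longleftrightarrow>
     (\<forall>z. \<exists>L. ((\<lambda>\<epsilon>. dil VH sH (1 / \<epsilon>) (mulH (ginv mulH (\<Phi> x)) (\<Phi> (mulG x (dil VG sG \<epsilon> z)))))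
                 \<longlongrightarrow> L) (at_right 0))"

end

theory Submission
  imports Defs
begin

text \<open>Put \<open>f y = \<Phi>(x)\<inverse> \<Phi>(x y)\<close>. Then \<open>f 0 = 0\<close>, and since \<open>D L\<^sub>b\<^sub>\<inverse> = \<tau>\<^sub>b\<inverse>\<close> the chain rule gives
  \<open>f'(0) = \<dd>\<^sub>x\<Phi>\<close>. For \<open>X\<close> of degree \<open>j\<close> we have \<open>\<delta>\<^sub>\<epsilon>X = \<epsilon>\<^sup>jX\<close>, so \<open>\<epsilon>\<^sup>-\<^sup>j f(\<epsilon>\<^sup>jX)\<close> tends to
  \<open>W = \<dd>\<^sub>x\<Phi>(X)\<close>, while Pansu differentiability says that \<open>\<delta>(1/\<epsilon>) f(\<epsilon>\<^sup>jX)\<close> converges, i.e.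
  that the degree-\<open>i\<close> component of \<open>f(\<epsilon>\<^sup>jX)\<close> is \<open>O(\<epsilon>\<^sup>i)\<close>. For \<open>i > j\<close> this forces the
  degree-\<open>i\<close> component of \<open>W\<close> to vanish.\<close>

lemma graded_decomp_ex1:
  assumes "graded_decomp V s"
  shows "\<exists>!c. (\<forall>j. c j \<in> V j) \<and> x = (\<Sum>j\<in>{1..s}. c j)"
  using assms unfolding graded_decomp_def by blast

lemma grade_comp_eqI:
  assumes "graded_decomp V s" "\<And>j. c j \<in> V j" "x = (\<Sum>j\<in>{1..s}. c j)"
  shows "grade_comp V s x = c"
  unfolding grade_comp_def
  by (rule the1_equality[OF graded_decomp_ex1[OF assms(1)]]) (use assms in simp)

lemma
  assumes "graded_decomp V s"
  shows grade_comp_mem: "grade_comp V s x j \<in> V j"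
    and sum_grade_comp: "(\<Sum>j\<in>{1..s}. grade_comp V s x j) = x"
  using theI'[OF graded_decomp_ex1[OF assms, of x]] unfolding grade_comp_def by auto

lemma linear_grade_comp:
  assumes "graded_decomp V s"
  shows "linear (\<lambda>x. grade_comp V s x i)"
proof -
  have sub: "\<And>j. subspace (V j)" using assms unfolding graded_decomp_def by blast
  have add: "grade_comp V s (x + y) = (\<lambda>j. grade_comp V s x j + grade_comp V s y j)" for x y
  proof (rule grade_comp_eqI[OF assms])
    show "x + y = (\<Sum>j\<in>{1..s}. grade_comp V s x j + grade_comp V s y j)"
      by (simp only: sum.distrib sum_grade_comp[OF assms])
  qed (simp add: subspace_add[OF sub] grade_comp_mem[OF assms])
  have scale: "grade_comp V s (c *\<^sub>R x) = (\<lambda>j. c *\<^sub>R grade_comp V s x j)" for c x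
  proof (rule grade_comp_eqI[OF assms])
    show "c *\<^sub>R x = (\<Sum>j\<in>{1..s}. c *\<^sub>R grade_comp V s x j)"
      by (simp only: scaleR_sum_right[symmetric] sum_grade_comp[OF assms])
  qed (simp add: subspace_scale[OF sub] grade_comp_mem[OF assms])
  show ?thesis
    by (rule linearI) (simp_all add: add scale)
qed

lemma grade_comp_dil:
  assumes "graded_decomp V s"
  shows "grade_comp V s (dil V s r x) i = r ^ i *\<^sub>R grade_comp V s x i"
proof -
  have sub: "\<And>j. subspace (V j)" using assms unfolding graded_decomp_def by blast
  have "grade_comp V s (dil V s r x) = (\<lambda>i. r ^ i *\<^sub>R grade_comp V s x i)"
    by (rule grade_comp_eqI[OF assms])
      (simp_all add: subspace_scale[OF sub] grade_comp_mem[OF assms] dil_def)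
  then show ?thesis by simp
qed

lemma
  assumes "graded_decomp V s" "X \<in> V j" "X \<noteq> 0"
  shows graded_decomp_degree_pos: "1 \<le> j"
    and dil_homogeneous: "dil V s r X = r ^ j *\<^sub>R X"
proof -
  have sub: "\<And>j. subspace (V j)" and V0: "V 0 = {0}" and Vs: "\<forall>j>s. V j = {0}"
    using assms(1) unfolding graded_decomp_def by blast+
  show j1: "1 \<le> j" using assms V0 by (cases j) auto
  have js: "j \<le> s" by (rule ccontr) (use assms Vs in auto)
  have "grade_comp V s X = (\<lambda>k. if k = j then X else 0)"
    by (rule grade_comp_eqI[OF assms(1)])
      (use assms(2) subspace_0[OF sub] j1 js in \<open>simp_all\<close>)
  then show "dil V s r X = r ^ j *\<^sub>R X"
    using j1 js by (simp add: dil_def if_distrib cong: if_cong)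
qed

lemma mem_filtration_if_grade_comp_vanishes:
  assumes "graded_decomp V s" "\<And>i. i > j \<Longrightarrow> grade_comp V s W i = 0"
  shows "W \<in> {(\<Sum>i\<in>{1..j}. w i) | w. \<forall>i. w i \<in> V i}"
proof -
  have Vs: "\<forall>i>s. V i = {0}" using assms(1) unfolding graded_decomp_def by blast
  have above_s: "grade_comp V s W i = 0" if "i > s" for i
    using grade_comp_mem[OF assms(1), of W i] Vs that by auto
  let ?c = "grade_comp V s W" and ?M = "max j s"
  have "W = (\<Sum>i\<in>{1..s}. ?c i)" using sum_grade_comp[OF assms(1)] by simp
  also have "\<dots> = (\<Sum>i\<in>{1..?M}. ?c i)"
    by (rule sum.mono_neutral_left) (use above_s in \<open>auto simp: not_le\<close>)
  also have "\<dots> = (\<Sum>i\<in>{1..j}. ?c i)"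
    by (rule sum.mono_neutral_right) (use assms(2) in \<open>auto simp: not_le\<close>)
  finally show ?thesis using grade_comp_mem[OF assms(1)] by blast
qed

lemma ginv_mul:
  assumes assoc: "\<And>x y z. mul (mul x y) z = mul x (mul y z)"
    and unit: "\<And>x. mul 0 x = x" "\<And>x. mul x 0 = x"
    and inverse: "mul y z = 0" "mul z y = 0"
  shows "mul y (ginv mul y) = 0" "mul (ginv mul y) y = 0"
proof -
  have "z' = z" if "mul y z' = 0" "mul z' y = 0" for z'
    by (metis assoc unit inverse(2) that(1))
  then have "ginv mul y = z"
    unfolding ginv_def using inverse by blast
  then show "mul y (ginv mul y) = 0" "mul (ginv mul y) y = 0"
    using inverse by simp_all
qed

lemma graded_group_ginv:
  assumes "graded_group mul V s"
  shows "mul y (ginv mul y) = 0" "mul (ginv mul y) y = 0"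
proof -
  have "\<And>x y z. mul (mul x y) z = mul x (mul y z)" "\<And>x. mul 0 x = x" "\<And>x. mul x 0 = x"
    and "\<exists>z. mul y z = 0 \<and> mul z y = 0"
    using assms unfolding graded_group_def by blast+
  then show "mul y (ginv mul y) = 0" "mul (ginv mul y) y = 0"
    using ginv_mul by metis+
qed

lemma has_derivative_left_translation:
  assumes "smooth_on UNIV (\<lambda>p. mul (fst p) (snd p))"
  shows "(mul a has_derivative frechet_derivative (mul a) (at y)) (at y)"
proof -
  obtain D where D: "((\<lambda>p. mul (fst p) (snd p)) has_derivative D) (at (a, y))"
    using assms unfolding smooth_on_def differentiable_def by (metis UNIV_I iter_dd.simps(1))
  have "((\<lambda>y. (a, y)) has_derivative (\<lambda>h. (0, h))) (at y)"
    by (auto intro!: derivative_eq_intros)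
  from has_derivative_compose[OF this D] have "mul a differentiable (at y)"
    unfolding differentiable_def by auto
  then show ?thesis using frechet_derivative_works by blast
qed

lemma inv_tau_eq_derivative_inverse_translation:
  assumes "graded_group mul V s"
  shows "inv (tau mul b) = frechet_derivative (mul (ginv mul b)) (at b)"
proof -
  let ?a = "ginv mul b"
  let ?A = "frechet_derivative (mul ?a) (at b)" and ?B = "tau mul b"
  have assoc: "\<And>x y z. mul (mul x y) z = mul x (mul y z)"
    and unit: "\<And>x. mul 0 x = x \<and> mul x 0 = x"
    and smooth: "smooth_on UNIV (\<lambda>p. mul (fst p) (snd p))"
    using assms unfolding graded_group_def by blast+
  have hA: "(mul ?a has_derivative ?A) (at b)"
    and hB: "(mul b has_derivative ?B) (at 0)"
    unfolding tau_def by (rule has_derivative_left_translation[OF smooth])+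
  have "((\<lambda>y. mul ?a (mul b y)) has_derivative (\<lambda>h. ?A (?B h))) (at 0)"
    by (rule has_derivative_compose[OF hB]) (use hA unit in simp)
  then have "((\<lambda>y. y) has_derivative ?A \<circ> ?B) (at 0)"
    by (simp add: assoc[symmetric] graded_group_ginv[OF assms] unit comp_def)
  then have AB: "?A \<circ> ?B = id"
    using has_derivative_unique[OF _ has_derivative_ident] by (simp add: id_def)
  have "((\<lambda>y. mul b (mul ?a y)) has_derivative (\<lambda>h. ?B (?A h))) (at b)"
    by (rule has_derivative_compose[OF hA]) (use hB graded_group_ginv[OF assms] in simp)
  then have "((\<lambda>y. y) has_derivative ?B \<circ> ?A) (at b)"
    by (simp add: assoc[symmetric] graded_group_ginv[OF assms] unit comp_def)
  then have BA: "?B \<circ> ?A = id"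
    using has_derivative_unique[OF _ has_derivative_ident] by (simp add: id_def)
  show ?thesis
    by (rule inv_unique_comp[OF BA AB])
qed

lemma has_derivative_frak_d:
  assumes G: "graded_group mulG VG sG" and H: "graded_group mulH VH sH"
    and "\<Phi> differentiable (at x)"
  shows "((\<lambda>y. mulH (ginv mulH (\<Phi> x)) (\<Phi> (mulG x y))) has_derivative frak_d mulG mulH \<Phi> x) (at 0)"
proof -
  have smoothG: "smooth_on UNIV (\<lambda>p. mulG (fst p) (snd p))"
    and smoothH: "smooth_on UNIV (\<lambda>p. mulH (fst p) (snd p))"
    using G H unfolding graded_group_def by blast+
  have unitG: "mulG x 0 = x"
    using G unfolding graded_group_def by blast
  have "(mulG x has_derivative tau mulG x) (at 0)"
    unfolding tau_def by (rule has_derivative_left_translation[OF smoothG])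
  moreover have "(\<Phi> has_derivative frechet_derivative \<Phi> (at x)) (at (mulG x 0))"
    unfolding unitG using assms(3) frechet_derivative_works by blast
  moreover have "(mulH (ginv mulH (\<Phi> x)) has_derivative inv (tau mulH (\<Phi> x))) (at (\<Phi> (mulG x 0)))"
    unfolding inv_tau_eq_derivative_inverse_translation[OF H] unitG by (rule has_derivative_left_translation[OF smoothH])
  ultimately show ?thesis
    unfolding frak_d_def comp_def by (rule has_derivative_compose[OF has_derivative_compose])
qed

lemma tendsto_power_difference_quotient:
  fixes f :: "'a::real_normed_vector \<Rightarrow> 'b::real_normed_vector"
  assumes f: "(f has_derivative D) (at 0)" "f 0 = 0" and "1 \<le> j"
  shows "((\<lambda>e. (1 / e ^ j) *\<^sub>R f (e ^ j *\<^sub>R X)) \<longlongrightarrow> D X) (at_right 0)"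
proof -
  have pos: "eventually (\<lambda>t::real. t > 0) (at_right 0)"
    by (simp add: eventually_at_filter)
  have "((\<lambda>t. t *\<^sub>R X) has_derivative (\<lambda>t. t *\<^sub>R X)) (at 0 within {0<..})"
    by (auto intro!: derivative_eq_intros)
  from has_derivative_compose[OF this, of f D] f(1)
  have "((\<lambda>t. f (t *\<^sub>R X)) has_derivative (\<lambda>t. t *\<^sub>R D X)) (at 0 within {0<..})"
    using has_derivative_linear[OF f(1)] by (simp add: linear_cmul)
  then have "((\<lambda>t. (f (t *\<^sub>R X) - t *\<^sub>R D X) /\<^sub>R norm t) \<longlongrightarrow> 0) (at_right 0)"
    by (simp add: has_derivative_at_within f(2))
  then have "((\<lambda>t. (1 / t) *\<^sub>R f (t *\<^sub>R X) - D X) \<longlongrightarrow> 0) (at_right 0)"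
    by (rule Lim_transform_eventually)
      (use pos in \<open>eventually_elim, simp add: scaleR_diff_right divide_inverse_commute\<close>)
  then have "((\<lambda>t. (1 / t) *\<^sub>R f (t *\<^sub>R X)) \<longlongrightarrow> D X) (at_right 0)"
    by (simp add: LIM_zero_iff)
  moreover have "filterlim (\<lambda>e::real. e ^ j) (at_right 0) (at_right 0)"
    unfolding filterlim_at
  proof
    show "eventually (\<lambda>e::real. e ^ j \<in> {0<..} \<and> e ^ j \<noteq> 0) (at_right 0)"
      using pos by eventually_elim simp
    have "((\<lambda>e::real. e ^ j) \<longlongrightarrow> 0 ^ j) (at_right 0)"
      by (intro tendsto_intros)
    then show "((\<lambda>e::real. e ^ j) \<longlongrightarrow> 0) (at_right 0)"
      using \<open>1 \<le> j\<close> by simp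
  qed
  ultimately show ?thesis
    by (rule filterlim_compose)
qed

lemma limit_zero_if_faster_rescaling_converges:
  fixes v :: "real \<Rightarrow> 'a::real_normed_vector"
  assumes "((\<lambda>e. (1 / e ^ j) *\<^sub>R v e) \<longlongrightarrow> a) (at_right 0)"
    and "((\<lambda>e. (1 / e) ^ i *\<^sub>R v e) \<longlongrightarrow> b) (at_right 0)" and "j < i"
  shows "a = 0"
proof -
  have "((\<lambda>e::real. e ^ (i - j)) \<longlongrightarrow> 0 ^ (i - j)) (at_right 0)"
    by (intro tendsto_intros)
  with \<open>j < i\<close> have "((\<lambda>e::real. e ^ (i - j)) \<longlongrightarrow> 0) (at_right 0)"
    by simp
  from tendsto_scaleR[OF this assms(2)]
  have "((\<lambda>e. e ^ (i - j) *\<^sub>R ((1 / e) ^ i *\<^sub>R v e)) \<longlongrightarrow> 0) (at_right 0)"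
    by simp
  moreover have "eventually (\<lambda>e. e ^ (i - j) *\<^sub>R ((1 / e) ^ i *\<^sub>R v e) = (1 / e ^ j) *\<^sub>R v e) (at_right 0)"
  proof -
    have "eventually (\<lambda>t::real. t > 0) (at_right 0)"
      by (simp add: eventually_at_filter)
    then show ?thesis
    proof eventually_elim
      case (elim e)
      have "e ^ i = e ^ (i - j) * e ^ j"
        using \<open>j < i\<close> by (simp flip: power_add)
      then have "e ^ (i - j) * (1 / e) ^ i = 1 / e ^ j"
        using elim by (simp add: power_one_over)
      then show ?case by simp
    qed
  qed
  ultimately have "((\<lambda>e. (1 / e ^ j) *\<^sub>R v e) \<longlongrightarrow> 0) (at_right 0)"
    by (rule Lim_transform_eventually)
  with assms(1) show "a = 0"
    by (rule tendsto_unique[OF trivial_limit_at_right_real])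
qed

lemma grade_comp_vanishes_if_dil_converges:
  assumes "graded_decomp V s"
    and "((\<lambda>e. (1 / e ^ j) *\<^sub>R g e) \<longlongrightarrow> W) (at_right 0)"
    and "((\<lambda>e. dil V s (1 / e) (g e)) \<longlongrightarrow> L) (at_right 0)" and "j < i"
  shows "grade_comp V s W i = 0"
proof -
  let ?P = "\<lambda>y. grade_comp V s y i"
  have P: "bounded_linear ?P"
    using linear_grade_comp[OF assms(1)] by (simp add: linear_conv_bounded_linear)
  have "((\<lambda>e. (1 / e ^ j) *\<^sub>R ?P (g e)) \<longlongrightarrow> ?P W) (at_right 0)"
    using bounded_linear.tendsto[OF P assms(2)]
    by (simp add: linear_cmul[OF linear_grade_comp[OF assms(1)]])
  moreover have "((\<lambda>e. (1 / e) ^ i *\<^sub>R ?P (g e)) \<longlongrightarrow> ?P L) (at_right 0)"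
    using bounded_linear.tendsto[OF P assms(3)] by (simp add: grade_comp_dil[OF assms(1)])
  ultimately show ?thesis
    by (rule limit_zero_if_faster_rescaling_converges) (fact \<open>j < i\<close>)
qed

lemma grade_comp_frak_d_vanishes_above:
  assumes G: "graded_group mulG VG sG" and H: "graded_group mulH VH sH"
    and "\<Phi> differentiable (at x)"
    and "pansu_differentiable_at mulG VG sG mulH VH sH \<Phi> x"
    and "X \<in> VG j" "j < i"
  shows "grade_comp VH sH (frak_d mulG mulH \<Phi> x X) i = 0"
proof -
  have gdG: "graded_decomp VG sG" and gdH: "graded_decomp VH sH"
    using G H unfolding graded_group_def by blast+
  have unitG: "mulG x 0 = x"
    using G unfolding graded_group_def by blast
  define f where "f y = mulH (ginv mulH (\<Phi> x)) (\<Phi> (mulG x y))" for y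
  have D: "(f has_derivative frak_d mulG mulH \<Phi> x) (at 0)"
    unfolding f_def by (rule has_derivative_frak_d[OF G H assms(3)])
  show ?thesis
  proof (cases "X = 0")
    case True
    then show ?thesis
      by (simp add: linear_0[OF has_derivative_linear[OF D]] linear_0[OF linear_grade_comp[OF gdH]])
  next
    case False
    then have "1 \<le> j" and dil: "\<And>e. dil VG sG e X = e ^ j *\<^sub>R X"
      using graded_decomp_degree_pos dil_homogeneous gdG \<open>X \<in> VG j\<close> by blast+
    have f0: "f 0 = 0"
      unfolding f_def unitG by (rule graded_group_ginv(2)[OF H])
    obtain L where "((\<lambda>e. dil VH sH (1 / e) (f (dil VG sG e X))) \<longlongrightarrow> L) (at_right 0)"
      using assms(4) unfolding pansu_differentiable_at_def f_def by blast
    then have "((\<lambda>e. dil VH sH (1 / e) (f (e ^ j *\<^sub>R X))) \<longlongrightarrow> L) (at_right 0)"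
      unfolding dil .
    with tendsto_power_difference_quotient[OF D f0 \<open>1 \<le> j\<close>] show ?thesis
      by (rule grade_comp_vanishes_if_dil_converges[OF gdH _ _ \<open>j < i\<close>])
  qed
qed

theorem lemma2p5:
  fixes mulG :: "'g::euclidean_space \<Rightarrow> 'g \<Rightarrow> 'g" and VG :: "nat \<Rightarrow> 'g set" and sG :: nat
    and mulH :: "'h::euclidean_space \<Rightarrow> 'h \<Rightarrow> 'h" and VH :: "nat \<Rightarrow> 'h set" and sH :: nat
    and U :: "'g set" and \<Phi> :: "'g \<Rightarrow> 'h" and x :: 'g
  assumes "graded_group mulG VG sG"
    and "graded_group mulH VH sH"
    and "open U"
    and "smooth_on U \<Phi>"
    and "x \<in> U"
    and "pansu_differentiable_at mulG VG sG mulH VH sH \<Phi> x"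
  shows "preserves_filtration_at mulG VG mulH VH \<Phi> x"
  unfolding preserves_filtration_at_def image_subset_iff
proof (intro allI ballI)
  fix j X
  assume "X \<in> VG j"
  have gdH: "graded_decomp VH sH"
    using assms(2) unfolding graded_group_def by blast
  have "\<Phi> differentiable (at x)"
    using assms(4,5) unfolding smooth_on_def by (metis iter_dd.simps(1))
  with assms(1,2,6) \<open>X \<in> VG j\<close>
  show "frak_d mulG mulH \<Phi> x X \<in> {(\<Sum>i\<in>{1..j}. w i) | w. \<forall>i. w i \<in> VH i}"
    by (intro mem_filtration_if_grade_comp_vanishes[OF gdH] grade_comp_frak_d_vanishes_above)
qed

end
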